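(* If $\mathcal N\in\mathrm{Ch}(A'B',AB)$ is completely PPT-preserving, then $S_\infty[A|B]_{\mathcal N}\ge-\log|A'|$.
   Context: All systems are finite-dimensional; $|X|$ denotes dimension; $\log$ base 2; $\mathrm{St}(X)$ density operators; $\mathrm{Ch}(X',X)$ quantum channels. A state $\rho_{XY}$ is PPT (across $X:Y$) if its partial transpose on $Y$ is positive semidefinite. $\mathcal N\in\mathrm{Ch}(A'B',AB)$ is completely PPT-preserving if $(\mathrm{id}_{R_AR_B}\otimes\mathcal N)(\rho)$ is PPT across $R_AA:R_BB$ for every state $\rho_{R_AA'R_BB'}$ that is PPT across $R_AA':R_BB'$, with $R_A\simeq A'$, $R_B\simeq B'$ (equivalently, its Choi state $\Phi^{\mathcal N}_{R_AAR_BB}:=(\mathrm{id}\otimes\mathcal N)(\Phi_{R_AA'}\otimes\Phi_{R_BB'})$, $\Phi_{RX}:=\frac1{|X|}\sum_{i,j}|ii\rangle\langle jj|$, is PPT across $R_AA:R_BB$). $\mathcal R^{\mathbb 1}_{A'\to A}(X):=\operatorname{tr}(X)\mathbb 1_A$. $D_\infty(\rho\|\sigma):=\log\inf\{\lambda:\rho\le\lambda\sigma\}$; for a channel $\mathcal M$ and CP map $\mathcal M'$, $D_\infty[\mathcal M\|\mathcal M']:=\sup_{\rho\in\mathrm{St}(RX')}D_\infty((\mathrm{id}\otimes\mathcal M)(\rho)\|(\mathrm{id}\otimes\mathcal M')(\rho))$. $S_\infty[A|B]_{\mathcal N}:=-\inf_{\mathcal Q\in\mathrm{Ch}(B',B)}D_\infty[\mathcal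 N\|\mathcal R^{\mathbb 1}_{A'\to A}\otimes\mathcal Q]$. *)

theory Defs
  imports "HOL-Analysis.Analysis"
begin

text \<open>Finite-dimensional quantum systems are modelled by finite index types;
  an operator on system 'n is a complex matrix indexed by 'n.\<close>

type_synonym 'n cmat = "'n \<Rightarrow> 'n \<Rightarrow> complex"

definition mtrace :: "('n::finite) cmat \<Rightarrow> complex" where
  "mtrace X = (\<Sum>i\<in>UNIV. X i i)"

definition ident :: "('n::finite) cmat" where
  "ident i j = (if i = j then 1 else 0)"

definition munit :: "'n \<Rightarrow> 'n \<Rightarrow> 'n cmat" where
  "munit i j = (\<lambda>k l. if k = i \<and> l = j then 1 else 0)"

definition psd :: "('n::finite) cmat \<Rightarrow> bool" where
  "psd X \<longleftrightarrow> (\<forall>v :: 'n \<Rightarrow> complex.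
      Im (\<Sum>i\<in>UNIV. \<Sum>j\<in>UNIV. cnj (v i) * X i j * v j) = 0 \<and>
      Re (\<Sum>i\<in>UNIV. \<Sum>j\<in>UNIV. cnj (v i) * X i j * v j) \<ge> 0)"

definition loewner_le :: "('n::finite) cmat \<Rightarrow> 'n cmat \<Rightarrow> bool" where
  "loewner_le X Y \<longleftrightarrow> psd (\<lambda>i j. Y i j - X i j)"

definition density :: "('n::finite) cmat \<Rightarrow> bool" where
  "density X \<longleftrightarrow> psd X \<and> mtrace X = 1"

text \<open>Tensor product of two linear maps on matrices (defined through its
  action on matrix units and linear extension).\<close>
definition tensor_map ::
  "(('i1::finite) cmat \<Rightarrow> ('o1::finite) cmat) \<Rightarrow> (('i2::finite) cmat \<Rightarrow> ('o2::finite) cmat)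
     \<Rightarrow> ('i1 \<times> 'i2) cmat \<Rightarrow> ('o1 \<times> 'o2) cmat" where
  "tensor_map M1 M2 X = (\<lambda>(o1, o2) (o1', o2').
     \<Sum>i1\<in>UNIV. \<Sum>i1'\<in>UNIV. \<Sum>i2\<in>UNIV. \<Sum>i2'\<in>UNIV.
        X (i1, i2) (i1', i2') * M1 (munit i1 i1') o1 o1' * M2 (munit i2 i2') o2 o2')"

definition id_tensor ::
  "(('i::finite) cmat \<Rightarrow> ('o::finite) cmat) \<Rightarrow> (('r::finite) \<times> 'i) cmat \<Rightarrow> ('r \<times> 'o) cmat" where
  "id_tensor M = tensor_map (\<lambda>X. X) M"

definition clinear_map :: "(('i::finite) cmat \<Rightarrow> ('o::finite) cmat) \<Rightarrow> bool" where
  "clinear_map M \<longleftrightarrow>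
     (\<forall>X Y. M (\<lambda>i j. X i j + Y i j) = (\<lambda>k l. M X k l + M Y k l)) \<and>
     (\<forall>c X. M (\<lambda>i j. c * X i j) = (\<lambda>k l. c * M X k l))"

text \<open>Completely positive: id_R \<otimes> M is positive, with reference R \<simeq> input system.\<close>
definition completely_positive :: "(('i::finite) cmat \<Rightarrow> ('o::finite) cmat) \<Rightarrow> bool" where
  "completely_positive M \<longleftrightarrow>
     (\<forall>X :: ('i \<times> 'i) cmat. psd X \<longrightarrow> psd (id_tensor M X))"

definition trace_preserving :: "(('i::finite) cmat \<Rightarrow> ('o::finite) cmat) \<Rightarrow> bool" where
  "trace_preserving M \<longleftrightarrow> (\<forall>X. mtrace (M X) = mtrace X)"

definition channel :: "(('i::finite) cmat \<Rightarrow> ('o::finite) cmat) \<Rightarrow> bool" where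
  "channel M \<longleftrightarrow> clinear_map M \<and> completely_positive M \<and> trace_preserving M"

definition partial_transpose :: "(('x::finite) \<times> ('y::finite)) cmat \<Rightarrow> ('x \<times> 'y) cmat" where
  "partial_transpose X = (\<lambda>(x, y) (x', y'). X (x, y') (x', y))"

definition PPT :: "(('x::finite) \<times> ('y::finite)) cmat \<Rightarrow> bool" where
  "PPT X \<longleftrightarrow> psd (partial_transpose X)"

text \<open>Action of id_{R_A R_B} \<otimes> N on an operator on (R_A A') \<times> (R_B B'),
  for N \<in> Ch(A'B', AB).\<close>
definition apply_bip ::
  "((('a1::finite) \<times> ('b1::finite)) cmat \<Rightarrow> (('a::finite) \<times> ('b::finite)) cmat)
   \<Rightarrow> (('ra::finite \<times> 'a1) \<times> ('rb::finite \<times> 'b1)) cmat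
   \<Rightarrow> (('ra \<times> 'a) \<times> ('rb \<times> 'b)) cmat" where
  "apply_bip N \<rho> = (\<lambda>((ra, a), (rb, b)) ((ra', a'), (rb', b')).
     \<Sum>x\<in>UNIV. \<Sum>x'\<in>UNIV. \<Sum>y\<in>UNIV. \<Sum>y'\<in>UNIV.
       \<rho> ((ra, x), (rb, y)) ((ra', x'), (rb', y')) * N (munit (x, y) (x', y')) (a, b) (a', b'))"

text \<open>Completely PPT-preserving, with R_A \<simeq> A' and R_B \<simeq> B'.\<close>
definition completely_PPT_preserving ::
  "((('a1::finite) \<times> ('b1::finite)) cmat \<Rightarrow> (('a::finite) \<times> ('b::finite)) cmat) \<Rightarrow> bool" where
  "completely_PPT_preserving N \<longleftrightarrow>
     (\<forall>\<rho> :: (('a1 \<times> 'a1) \<times> ('b1 \<times> 'b1)) cmat.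
        density \<rho> \<and> PPT \<rho> \<longrightarrow> PPT (apply_bip N \<rho>))"

definition replace_id :: "('i::finite) cmat \<Rightarrow> ('o::finite) cmat" where
  "replace_id X = (\<lambda>k l. mtrace X * ident k l)"

text \<open>Max-relative entropy D_\<infinity>(\<rho>||\<sigma>) = log_2 inf{\<lambda> : \<rho> \<le> \<lambda>\<sigma>}, valued in
  the extended reals (+\<infinity> if no such \<lambda> exists). Only \<lambda> > 0 are considered,
  where log is defined.\<close>
definition D_max :: "('n::finite) cmat \<Rightarrow> 'n cmat \<Rightarrow> ereal" where
  "D_max \<rho> \<sigma> = Inf {ereal (log 2 c) | c. c > 0 \<and>
       loewner_le \<rho> (\<lambda>i j. complex_of_real c * \<sigma> i j)}"

text \<open>Channel max-divergence, supremum over states on R X' with R \<simeq> X'.\<close>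
definition D_max_ch ::
  "(('i::finite) cmat \<Rightarrow> ('o::finite) cmat) \<Rightarrow> ('i cmat \<Rightarrow> 'o cmat) \<Rightarrow> ereal" where
  "D_max_ch M M' = (SUP \<rho> \<in> {\<rho> :: ('i \<times> 'i) cmat. density \<rho>}.
       D_max (id_tensor M \<rho>) (id_tensor M' \<rho>))"

definition S_max ::
  "((('a1::finite) \<times> ('b1::finite)) cmat \<Rightarrow> (('a::finite) \<times> ('b::finite)) cmat) \<Rightarrow> ereal" where
  "S_max N = - (INF Q \<in> {Q :: 'b1 cmat \<Rightarrow> 'b cmat. channel Q}.
                  D_max_ch N (tensor_map (replace_id :: 'a1 cmat \<Rightarrow> 'a cmat) Q))"

end

theory Submission
  imports Defs "HOL-Library.Complex_Order"
begin

text \<open>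
  Since N is completely PPT-preserving, its Choi matrix J, read as an operator on
  (R_A A) : (R_B B), has positive partial transpose. The reduction map X \<mapsto> tr X 1 - X is the
  transpose followed by the completely positive map with Choi matrix 1 - F (F the swap), so
  PPT operators satisfy the reduction criterion J \<le> 1_{R_A A} \<otimes> tr_{R_A A} J. The right-hand
  side is |A'| times the Choi matrix of R^1 \<otimes> Q, where Q(Y) = tr_A N(1_{A'} \<otimes> Y) / |A'| is a
  channel. An operator inequality between Choi matrices carries over to the outputs of
  id \<otimes> N and id \<otimes> (R^1 \<otimes> Q) on every state, hence D_\<infinity>[N \<parallel> R^1 \<otimes> Q] \<le> log |A'|.
\<close>

section \<open>Positive semidefinite matrices\<close>

lemma delta_simps:
  fixes x y :: "'a::mult_zero" and g :: "'b \<Rightarrow> 'c::comm_monoid_add"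
  shows "(if c then x else 0) * y = (if c then x * y else 0)"
    and "y * (if c then x else 0) = (if c then y * x else 0)"
    and "cnj (if c then z else 0) = (if c then cnj z else 0)"
    and "(\<Sum>j\<in>S. if c then g j else 0) = (if c then \<Sum>j\<in>S. g j else 0)"
    and "(if c \<and> d then w else 0) = (if c then if d then w else 0 else 0)"
  by simp_all

lemma sum_UNIV_prod: "(\<Sum>p\<in>UNIV. f p) = (\<Sum>a\<in>UNIV. \<Sum>b\<in>UNIV. f (a, b))"
  by (simp add: sum.cartesian_product)

lemma sum_rotate3:
  "(\<Sum>a\<in>A. \<Sum>b\<in>B. \<Sum>c\<in>C. T a b c) = (\<Sum>c\<in>C. \<Sum>a\<in>A. \<Sum>b\<in>B. T a b c)"
proof -
  have "(\<Sum>a\<in>A. \<Sum>b\<in>B. \<Sum>c\<in>C. T a b c) = (\<Sum>a\<in>A. \<Sum>c\<in>C. \<Sum>b\<in>B. T a b c)"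
    by (rule sum.cong[OF refl], rule sum.swap)
  also have "\<dots> = (\<Sum>c\<in>C. \<Sum>a\<in>A. \<Sum>b\<in>B. T a b c)"
    by (rule sum.swap)
  finally show ?thesis .
qed

definition qform :: "('n::finite) cmat \<Rightarrow> ('n \<Rightarrow> complex) \<Rightarrow> complex" where
  "qform A v = (\<Sum>i\<in>UNIV. \<Sum>j\<in>UNIV. cnj (v i) * A i j * v j)"

(* Complex_Order: 0 \<le> z means that z is a nonnegative real. *)
lemma psd_iff_qform_nonneg: "psd A \<longleftrightarrow> (\<forall>v. 0 \<le> qform A v)"
  unfolding psd_def qform_def less_eq_complex_def by auto

lemma psdI: "(\<And>v. 0 \<le> qform A v) \<Longrightarrow> psd A"
  by (simp add: psd_iff_qform_nonneg)

lemma psdD: "psd A \<Longrightarrow> 0 \<le> qform A v"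
  by (simp add: psd_iff_qform_nonneg)

lemma cnj_mult_self_nonneg: "0 \<le> cnj z * z"
  by (simp add: less_eq_complex_def)

lemma qform_two_points:
  "qform A (\<lambda>k. (if k = p then a else 0) + (if k = q then b else 0)) =
     cnj a * A p p * a + cnj a * A p q * b + cnj b * A q p * a + cnj b * A q q * b"
  unfolding qform_def by (simp add: ring_distribs sum.distrib delta_simps)

lemma psd_diag_nonneg:
  assumes "psd A" shows "0 \<le> A i i"
proof -
  have "qform A (\<lambda>k. if k = i then 1 else 0) = A i i"
    unfolding qform_def by (simp add: delta_simps)
  then show ?thesis
    using psdD[OF assms] by metis
qed

lemma psd_hermitian:
  assumes "psd A" shows "A j i = cnj (A i j)"
proof -
  have "0 \<le> qform A (\<lambda>k. (if k = i then 1 else 0) + (if k = j then c else 0))" for c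
    using assms by (rule psdD)
  then have "0 \<le> A i i + A i j * c + cnj c * A j i + cnj c * A j j * c" for c
    by (simp add: qform_two_points mult_ac)
  from this[of 1] this[of \<i>] have "A j i + A i j \<in> \<real>" "\<i> * A i j - \<i> * A j i \<in> \<real>"
    using psd_diag_nonneg[OF assms, of i] psd_diag_nonneg[OF assms, of j]
    by (auto simp: less_eq_complex_def complex_is_Real_iff)
  then show ?thesis
    by (simp add: complex_is_Real_iff complex_eq_iff)
qed

lemma psd_zero_diag_row:
  assumes "psd A" and "A s s = 0" shows "A s j = 0"
proof (rule ccontr)
  assume "A s j \<noteq> 0"
  then have n_pos: "(cmod (A s j))\<^sup>2 > 0" by simp
  define t where "t = (Re (A j j) + 1) / (2 * (cmod (A s j))\<^sup>2)"
  define x where "x = - of_real t * A s j"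
  have "qform A (\<lambda>k. (if k = j then 1 else 0) + (if k = s then x else 0)) =
      A j j - 2 * of_real t * (A s j * cnj (A s j))"
    unfolding qform_two_points x_def psd_hermitian[OF assms(1), of s j] assms(2)
    by (simp add: algebra_simps)
  also have "\<dots> = A j j - of_real (2 * t * (cmod (A s j))\<^sup>2)"
    by (simp only: complex_norm_square[symmetric]) simp
  also have "2 * t * (cmod (A s j))\<^sup>2 = Re (A j j) + 1"
    using n_pos by (simp add: t_def)
  finally have "0 \<le> A j j - of_real (Re (A j j) + 1)"
    by (metis assms(1) psdD)
  then show False by (simp add: less_eq_complex_def)
qed

lemma psd_rank_one: "psd (\<lambda>p q. \<phi> p * cnj (\<phi> q))"
proof (rule psdI)
  fix v
  have "qform (\<lambda>p q. \<phi> p * cnj (\<phi> q)) v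
      = cnj (\<Sum>q\<in>UNIV. cnj (\<phi> q) * v q) * (\<Sum>q\<in>UNIV. cnj (\<phi> q) * v q)"
    unfolding qform_def by (simp add: sum_product mult_ac)
  then show "0 \<le> qform (\<lambda>p q. \<phi> p * cnj (\<phi> q)) v"
    by (simp only: cnj_mult_self_nonneg)
qed

lemma psd_sum:
  assumes "\<And>k. k \<in> K \<Longrightarrow> psd (F k)"
  shows "psd (\<lambda>p q. \<Sum>k\<in>K. F k p q)"
proof (rule psdI)
  fix v
  have "qform (\<lambda>p q. \<Sum>k\<in>K. F k p q) v = (\<Sum>k\<in>K. qform (F k) v)"
    unfolding qform_def by (simp add: sum_distrib_left sum_distrib_right sum.swap[of _ K])
  then show "0 \<le> qform (\<lambda>p q. \<Sum>k\<in>K. F k p q) v"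
    using assms by (simp add: sum_nonneg psdD)
qed

lemma psd_scale:
  assumes "0 \<le> c" and "psd A" shows "psd (\<lambda>p q. c * A p q)"
proof (rule psdI)
  fix v
  have "qform (\<lambda>p q. c * A p q) v = c * qform A v"
    unfolding qform_def by (simp add: sum_distrib_left mult_ac)
  then show "0 \<le> qform (\<lambda>p q. c * A p q) v"
    using assms by (simp add: psdD)
qed

lemma psd_reindex:
  fixes A :: "('m::finite) cmat" and f :: "('n::finite) \<Rightarrow> 'm"
  assumes "psd A" and "bij f"
  shows "psd (\<lambda>p q. A (f p) (f q))"
proof (rule psdI)
  fix v :: "'n \<Rightarrow> complex"
  define u where "u = v \<circ> inv f"
  have bij: "bij_betw f UNIV UNIV"
    using assms(2) by (simp add: bij_def bij_betw_def)
  have u: "u (f p) = v p" for p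
    unfolding u_def using assms(2) by (simp add: bij_def)
  have "qform A u = (\<Sum>p\<in>UNIV. \<Sum>j\<in>UNIV. cnj (u (f p)) * A (f p) j * u j)"
    unfolding qform_def by (rule sum.reindex_bij_betw[OF bij, symmetric])
  also have "\<dots> = (\<Sum>p\<in>UNIV. \<Sum>q\<in>UNIV. cnj (u (f p)) * A (f p) (f q) * u (f q))"
    by (intro sum.cong refl sum.reindex_bij_betw[OF bij, symmetric])
  also have "\<dots> = qform (\<lambda>p q. A (f p) (f q)) v"
    unfolding qform_def u ..
  finally show "0 \<le> qform (\<lambda>p q. A (f p) (f q)) v"
    using assms(1) by (metis psdD)
qed

lemma psd_transpose:
  assumes "psd A" shows "psd (\<lambda>p q. A q p)"
proof (rule psdI)
  fix v
  have "qform (\<lambda>p q. A q p) v = qform A (\<lambda>k. cnj (v k))"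
    unfolding qform_def by (subst sum.swap) (simp add: mult_ac)
  then show "0 \<le> qform (\<lambda>p q. A q p) v"
    using assms by (simp add: psdD)
qed

definition ptrace_fst :: "(('c::finite) \<times> ('d::finite)) cmat \<Rightarrow> 'd cmat" where
  "ptrace_fst Z = (\<lambda>d d'. \<Sum>c\<in>UNIV. Z (c, d) (c, d'))"

lemma psd_ptrace_fst:
  assumes "psd Z" shows "psd (ptrace_fst Z)"
proof (rule psdI)
  fix v
  have "qform (ptrace_fst Z) v
      = (\<Sum>d\<in>UNIV. \<Sum>d'\<in>UNIV. \<Sum>c\<in>UNIV. cnj (v d) * Z (c, d) (c, d') * v d')"
    unfolding qform_def ptrace_fst_def by (simp add: sum_distrib_left sum_distrib_right)
  also have "\<dots> = (\<Sum>c\<in>UNIV. \<Sum>d\<in>UNIV. \<Sum>d'\<in>UNIV. cnj (v d) * Z (c, d) (c, d') * v d')"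
    by (rule sum_rotate3)
  also have "\<dots> = (\<Sum>c\<in>UNIV. qform Z (\<lambda>(c', d). if c' = c then v d else 0))"
    unfolding qform_def by (simp add: sum_UNIV_prod delta_simps)
  finally show "0 \<le> qform (ptrace_fst Z) v"
    using assms by (simp add: sum_nonneg psdD)
qed

lemma qform_add_point:
  "qform A (\<lambda>k. v k + (if k = s then \<tau> else 0)) =
     qform A v + cnj \<tau> * (\<Sum>j\<in>UNIV. A s j * v j) + (\<Sum>i\<in>UNIV. cnj (v i) * A i s) * \<tau>
       + cnj \<tau> * A s s * \<tau>"
  unfolding qform_def
  by (simp add: ring_distribs sum.distrib delta_simps sum_distrib_left sum_distrib_right
      algebra_simps)

(* For A s s = 0 the quotient is 0, and the statement degenerates to psd A. *)
lemma psd_schur_complement: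
  assumes "psd A" shows "psd (\<lambda>i j. A i j - A i s * A s j / A s s)"
proof (rule psdI)
  fix v
  define \<alpha> where "\<alpha> = (\<Sum>j\<in>UNIV. A s j * v j)"
  have col: "(\<Sum>i\<in>UNIV. cnj (v i) * A i s) = cnj \<alpha>"
    unfolding \<alpha>_def by (simp add: psd_hermitian[OF assms, of s] mult.commute)
  have real_diag: "cnj (A s s) = A s s"
    using psd_hermitian[OF assms, of s s] by simp
  have "qform (\<lambda>i j. A i j - A i s * A s j / A s s) v
      = qform A v - (\<Sum>i\<in>UNIV. cnj (v i) * A i s) * \<alpha> / A s s"
    unfolding qform_def \<alpha>_def
    by (simp add: ring_distribs sum_subtractf sum_distrib_left sum_distrib_right sum_divide_distrib mult_ac)
  also have "\<dots> = qform A v - cnj \<alpha> * \<alpha> / A s s"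
    unfolding col ..
  also have "\<dots> = qform A (\<lambda>k. v k + (if k = s then - \<alpha> / A s s else 0))"
    unfolding qform_add_point col \<alpha>_def[symmetric]
    by (cases "A s s = 0") (simp_all add: real_diag field_simps)
  finally have "qform (\<lambda>i j. A i j - A i s * A s j / A s s) v
      = qform A (\<lambda>k. v k + (if k = s then - \<alpha> / A s s else 0))" .
  then show "0 \<le> qform (\<lambda>i j. A i j - A i s * A s j / A s s) v"
    by (simp add: psdD[OF assms])
qed

lemma psd_column_outer:
  fixes A :: "('n::finite) cmat" and s :: 'n
  assumes "psd A"
  defines "f \<equiv> \<lambda>i. A i s / of_real (sqrt (Re (A s s)))"
  shows "f i * cnj (f j) = A i s * A s j / A s s"
proof -
  have "A s s = of_real (Re (A s s))" and "Re (A s s) \<ge> 0"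
    using psd_diag_nonneg[OF assms(1), of s] by (auto simp: less_eq_complex_def complex_eq_iff)
  then have "of_real (sqrt (Re (A s s))) * of_real (sqrt (Re (A s s))) = A s s"
    by (metis of_real_mult real_sqrt_mult_self abs_of_nonneg)
  then show ?thesis
    unfolding f_def using psd_hermitian[OF assms(1), of s j] by simp
qed

lemma psd_schur_complement_vanishes:
  assumes "psd A"
  shows "A s j - A s s * A s j / A s s = 0" and "A i s - A i s * A s s / A s s = 0"
proof -
  have "A s j = 0" "A i s = 0" if "A s s = 0"
    using psd_zero_diag_row[OF assms that] psd_hermitian[OF assms, of s i] by auto
  then show "A s j - A s s * A s j / A s s = 0" and "A i s - A i s * A s s / A s s = 0"
    by (cases "A s s = 0"; simp)+
qed

(* Cholesky elimination: removing the rank-one term of column s leaves the Schur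
   complement, which is psd and vanishes on row and column s. *)
lemma psd_gram_on_support:
  assumes "finite S" and "psd A" and "\<And>i j. i \<notin> S \<or> j \<notin> S \<Longrightarrow> A i j = 0"
  shows "\<exists>w. \<forall>i j. A i j = (\<Sum>k\<in>S. w k i * cnj (w k j))"
  using assms
proof (induction S arbitrary: A rule: finite_induct)
  case empty
  then show ?case by auto
next
  case (insert s S)
  define f where "f i = A i s / of_real (sqrt (Re (A s s)))" for i
  define A' where "A' i j = A i j - A i s * A s j / A s s" for i j
  have "psd A'"
    unfolding A'_def using insert.prems(1) by (rule psd_schur_complement)
  moreover have "A' i j = 0" if off: "i \<notin> S \<or> j \<notin> S" for i j
  proof -
    consider "i = s" | "j = s" | "i \<notin> insert s S" | "j \<notin> insert s S"
      using off by blast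
    then show ?thesis
      using insert.prems psd_schur_complement_vanishes[OF insert.prems(1)]
      unfolding A'_def by cases auto
  qed
  ultimately obtain w where w: "\<And>i j. A' i j = (\<Sum>k\<in>S. w k i * cnj (w k j))"
    using insert.IH by blast
  have "A i j = (\<Sum>k\<in>insert s S. (w(s := f)) k i * cnj ((w(s := f)) k j))" for i j
  proof -
    have "(\<Sum>k\<in>S. (w(s := f)) k i * cnj ((w(s := f)) k j)) = A' i j"
      unfolding w using insert.hyps(2) by (intro sum.cong) auto
    then show ?thesis
      using insert.hyps psd_column_outer[OF insert.prems(1), where s = s and i = i and j = j]
      by (simp add: A'_def f_def)
  qed
  then show ?case by blast
qed

lemma psd_gram:
  fixes A :: "('n::finite) cmat"
  assumes "psd A"
  shows "\<exists>w::'n \<Rightarrow> 'n \<Rightarrow> complex. \<forall>i j. A i j = (\<Sum>k\<in>UNIV. w k i * cnj (w k j))"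
  using psd_gram_on_support[of UNIV A] assms by simp

section \<open>Link products and Choi matrices\<close>

definition link_product ::
  "(('r::finite) \<times> ('i::finite)) cmat \<Rightarrow> ('i \<times> ('o::finite)) cmat \<Rightarrow> ('r \<times> 'o) cmat" where
  "link_product X C =
     (\<lambda>(r, y) (r', y'). \<Sum>i\<in>UNIV. \<Sum>i'\<in>UNIV. X (r, i) (r', i') * C (i, y) (i', y'))"

lemma qform_link_product_rank_one:
  "qform (link_product (\<lambda>p q. \<phi> p * cnj (\<phi> q)) C) v
     = qform C (\<lambda>(i, y). \<Sum>r\<in>UNIV. cnj (\<phi> (r, i)) * v (r, y))"
proof -
  define T where "T = (\<lambda>(r, y, r', y', i, i').
    cnj (v (r, y)) * \<phi> (r, i) * cnj (\<phi> (r', i')) * C (i, y) (i', y') * v (r', y'))"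
  have "qform (link_product (\<lambda>p q. \<phi> p * cnj (\<phi> q)) C) v = (\<Sum>x\<in>UNIV. T x)"
    unfolding qform_def link_product_def T_def
    by (simp add: sum_UNIV_prod sum_distrib_left sum_distrib_right mult_ac)
  also have "\<dots> = (\<Sum>x\<in>UNIV. T ((\<lambda>(i, y, i', y', r', r). (r, y, r', y', i, i')) x))"
    by (rule sum.reindex_bij_betw[symmetric],
        rule bij_betwI[where g = "\<lambda>(r, y, r', y', i, i'). (i, y, i', y', r', r)"]) auto
  also have "\<dots> = qform C (\<lambda>(i, y). \<Sum>r\<in>UNIV. cnj (\<phi> (r, i)) * v (r, y))"
    unfolding qform_def T_def
    by (simp add: sum_UNIV_prod sum_distrib_left sum_distrib_right mult_ac)
  finally show ?thesis .
qed

lemma link_product_sum_left: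
  "link_product (\<lambda>p q. \<Sum>k\<in>K. F k p q) C = (\<lambda>p q. \<Sum>k\<in>K. link_product (F k) C p q)"
  unfolding link_product_def
  by (simp add: fun_eq_iff sum_distrib_right sum.swap[where B = K] split: prod.splits)

lemma psd_link_product:
  fixes X :: "(('r::finite) \<times> ('i::finite)) cmat" and C :: "('i \<times> ('o::finite)) cmat"
  assumes "psd X" and "psd C"
  shows "psd (link_product X C)"
proof -
  obtain w :: "'r \<times> 'i \<Rightarrow> 'r \<times> 'i \<Rightarrow> complex"
    where w: "\<And>p q. X p q = (\<Sum>k\<in>UNIV. w k p * cnj (w k q))"
    using psd_gram[OF assms(1)] by blast
  have "link_product X C = (\<lambda>p q. \<Sum>k\<in>UNIV. link_product (\<lambda>p q. w k p * cnj (w k q)) C p q)"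
    unfolding w by (rule link_product_sum_left)
  moreover have "psd (link_product (\<lambda>p q. w k p * cnj (w k q)) C)" for k
    using assms(2) by (simp add: psd_iff_qform_nonneg qform_link_product_rank_one)
  ultimately show ?thesis
    by (simp add: psd_sum)
qed

definition choi :: "(('i::finite) cmat \<Rightarrow> ('o::finite) cmat) \<Rightarrow> ('i \<times> 'o) cmat" where
  "choi M = (\<lambda>(i, k) (i', l). M (munit i i') k l)"

definition choi_map :: "(('i::finite) \<times> ('o::finite)) cmat \<Rightarrow> 'i cmat \<Rightarrow> 'o cmat" where
  "choi_map C X = (\<lambda>k l. \<Sum>i\<in>UNIV. \<Sum>i'\<in>UNIV. X i i' * C (i, k) (i', l))"

lemma choi_choi_map: "choi (choi_map C) = C"
  unfolding choi_def choi_map_def munit_def by (simp add: fun_eq_iff delta_simps)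

lemma id_tensor_eq_link_product: "id_tensor M X = link_product X (choi M)"
  unfolding id_tensor_def tensor_map_def munit_def link_product_def choi_def
  by (simp add: fun_eq_iff delta_simps split: prod.splits)

lemma choi_tensor_map:
  "choi (tensor_map M1 M2) ((x, y), (a, b)) ((x', y'), (a', b'))
     = choi M1 (x, a) (x', a') * choi M2 (y, b) (y', b')"
  unfolding choi_def tensor_map_def munit_def by (simp add: delta_simps)

lemma choi_replace_id: "choi replace_id (x, a) (x', a') = ident x x' * ident a a'"
  unfolding choi_def replace_id_def mtrace_def munit_def ident_def by (simp add: delta_simps)

lemma sum_choi_diag: "(\<Sum>k\<in>UNIV. choi M (i, k) (i', k)) = mtrace (M (munit i i'))"
  unfolding choi_def mtrace_def by simp

lemma mtrace_munit: "mtrace (munit i i') = ident i i'"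
  unfolding mtrace_def munit_def ident_def by (simp add: delta_simps)

lemma completely_positive_iff_psd_choi:
  fixes M :: "('i::finite) cmat \<Rightarrow> ('o::finite) cmat"
  shows "completely_positive M \<longleftrightarrow> psd (choi M)"
proof
  define \<Omega> where "\<Omega> = (\<lambda>(r::'i, i::'i). if r = i then (1::complex) else 0)"
  have "choi M = id_tensor M (\<lambda>p q. \<Omega> p * cnj (\<Omega> q))"
    unfolding id_tensor_eq_link_product link_product_def \<Omega>_def
    by (simp add: fun_eq_iff delta_simps)
  then show "completely_positive M \<Longrightarrow> psd (choi M)"
    unfolding completely_positive_def using psd_rank_one by metis
next
  show "psd (choi M) \<Longrightarrow> completely_positive M"
    unfolding completely_positive_def id_tensor_eq_link_product by (simp add: psd_link_product)
qed

lemma loewner_le_id_tensor: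
  assumes "loewner_le (choi M) (\<lambda>p q. c * choi M' p q)" and "psd X"
  shows "loewner_le (id_tensor M X) (\<lambda>p q. c * id_tensor M' X p q)"
proof -
  have "(\<lambda>p q. c * id_tensor M' X p q - id_tensor M X p q)
      = link_product X (\<lambda>p q. c * choi M' p q - choi M p q)"
    unfolding id_tensor_eq_link_product link_product_def
    by (simp add: fun_eq_iff ring_distribs sum_subtractf sum_distrib_left mult_ac split: prod.splits)
  then show ?thesis
    using psd_link_product[OF assms(2)] assms(1) unfolding loewner_le_def by simp
qed

lemma channel_choi_map:
  assumes "psd C" and "\<And>i i'. (\<Sum>k\<in>UNIV. C (i, k) (i', k)) = ident i i'"
  shows "channel (choi_map C)"
  unfolding channel_def
proof (intro conjI)
  show "clinear_map (choi_map C)"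
    unfolding clinear_map_def choi_map_def
    by (simp add: fun_eq_iff ring_distribs sum.distrib sum_distrib_left mult_ac)
  show "completely_positive (choi_map C)"
    unfolding completely_positive_iff_psd_choi choi_choi_map by (rule assms(1))
  show "trace_preserving (choi_map C)"
    unfolding trace_preserving_def
  proof
    fix X
    have "mtrace (choi_map C X) = (\<Sum>k\<in>UNIV. \<Sum>i\<in>UNIV. \<Sum>i'\<in>UNIV. X i i' * C (i, k) (i', k))"
      unfolding mtrace_def choi_map_def ..
    also have "\<dots> = (\<Sum>i\<in>UNIV. \<Sum>i'\<in>UNIV. \<Sum>k\<in>UNIV. X i i' * C (i, k) (i', k))"
      by (rule sum_rotate3[symmetric])
    also have "\<dots> = (\<Sum>i\<in>UNIV. \<Sum>i'\<in>UNIV. X i i' * ident i i')"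
      by (simp add: sum_distrib_left[symmetric] assms(2))
    finally show "mtrace (choi_map C X) = mtrace X"
      unfolding mtrace_def ident_def by (simp add: delta_simps)
  qed
qed

section \<open>The reduction criterion for PPT operators\<close>

lemma psd_identity_minus_swap:
  "psd (\<lambda>(a, b) (a', b'). ident a a' * ident b b' - ident a b' * ident b a')"
proof (rule psdI)
  fix u :: "'a \<times> 'a \<Rightarrow> complex"
  define K where "K = (\<lambda>(a, b) (a', b'). ident a a' * ident b b' - ident a b' * ident (b::'a) a')"
  define S where "S f g = (\<Sum>a\<in>UNIV. \<Sum>b\<in>UNIV. cnj (f a b) * g a b)"
    for f g :: "'a \<Rightarrow> 'a \<Rightarrow> complex"
  have swap: "S (\<lambda>a b. u (b, a)) (\<lambda>a b. u (b, a)) = S (\<lambda>a b. u (a, b)) (\<lambda>a b. u (a, b))"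
    "S (\<lambda>a b. u (b, a)) (\<lambda>a b. u (a, b)) = S (\<lambda>a b. u (a, b)) (\<lambda>a b. u (b, a))"
    unfolding S_def by (rule sum.swap)+
  have "qform K u
      = S (\<lambda>a b. u (a, b)) (\<lambda>a b. u (a, b)) - S (\<lambda>a b. u (a, b)) (\<lambda>a b. u (b, a))"
    unfolding qform_def K_def S_def ident_def
    by (simp add: sum_UNIV_prod ring_distribs sum_subtractf delta_simps)
  also have "\<dots> = S (\<lambda>a b. u (a, b) - u (b, a)) (\<lambda>a b. u (a, b) - u (b, a)) / 2"
    using swap unfolding S_def by (simp add: ring_distribs sum_subtractf)
  finally have q: "qform K u = S (\<lambda>a b. u (a, b) - u (b, a)) (\<lambda>a b. u (a, b) - u (b, a)) / 2" .
  have "0 \<le> S (\<lambda>a b. u (a, b) - u (b, a)) (\<lambda>a b. u (a, b) - u (b, a))"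
    unfolding S_def by (intro sum_nonneg cnj_mult_self_nonneg)
  then show "0 \<le> qform K u"
    unfolding q by (simp add: less_eq_complex_def)
qed

lemma reduction_criterion_if_PPT:
  fixes Z :: "(('c::finite) \<times> ('d::finite)) cmat"
  assumes "psd (partial_transpose Z)"
  shows "loewner_le Z (\<lambda>(c, d) (c', d'). ident c c' * ptrace_fst Z d d')"
proof -
  \<comment> \<open>tr X 1 - X is the transpose followed by the CP map with Choi matrix K\<close>
  define X where "X = (\<lambda>(d, a) (d', a'). Z (a', d) (a, d'))"
  define K where "K = (\<lambda>(a, b) (a', b'). ident a a' * ident b b' - ident a b' * ident (b::'c) a')"
  have "X = (\<lambda>p q. partial_transpose Z (prod.swap q) (prod.swap p))"
    unfolding X_def partial_transpose_def by (simp add: fun_eq_iff)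
  then have "psd X"
    using psd_transpose[OF psd_reindex[OF assms, of prod.swap]] by simp
  then have "psd (\<lambda>p q. link_product X K (prod.swap p) (prod.swap q))"
    using psd_reindex[OF psd_link_product[OF _ psd_identity_minus_swap], of X prod.swap]
    unfolding K_def by simp
  moreover have "(\<lambda>p q. link_product X K (prod.swap p) (prod.swap q))
      = (\<lambda>p q. (\<lambda>(c, d) (c', d'). ident c c' * ptrace_fst Z d d') p q - Z p q)"
    unfolding link_product_def X_def K_def ptrace_fst_def ident_def
    by (simp add: fun_eq_iff ring_distribs sum_subtractf delta_simps sum_distrib_left)
  ultimately show ?thesis
    unfolding loewner_le_def by simp
qed

definition mid_swap :: "('a \<times> 'b) \<times> ('c \<times> 'd) \<Rightarrow> ('a \<times> 'c) \<times> ('b \<times> 'd)" where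
  "mid_swap = (\<lambda>((a, b), (c, d)). ((a, c), (b, d)))"

lemma bij_mid_swap: "bij mid_swap"
  by (rule o_bij[where g = mid_swap]) (auto simp: mid_swap_def fun_eq_iff)

(* The unnormalised Choi state \<Phi>^N of the paper, with its systems ordered (R_A A) \<times> (R_B B). *)
definition choi_bipartite ::
  "((('a1::finite) \<times> ('b1::finite)) cmat \<Rightarrow> (('a::finite) \<times> ('b::finite)) cmat)
     \<Rightarrow> (('a1 \<times> 'a) \<times> ('b1 \<times> 'b)) cmat" where
  "choi_bipartite N = (\<lambda>u w. choi N (mid_swap u) (mid_swap w))"

lemma PPT_choi_bipartite:
  fixes N :: "(('a1::finite) \<times> ('b1::finite)) cmat \<Rightarrow> (('a::finite) \<times> ('b::finite)) cmat"
  assumes "completely_PPT_preserving N"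
  shows "PPT (choi_bipartite N)"
proof -
  define c :: complex where "c = inverse (of_nat (CARD('a1) * CARD('b1)))"
  have c_pos: "0 \<le> c" "c \<noteq> 0"
    unfolding c_def by (simp_all add: less_eq_complex_def)
  define \<Omega> where
    "\<Omega> = (\<lambda>((r::'a1, x::'a1), (s::'b1, y::'b1)). if r = x \<and> s = y then (1::complex) else 0)"
  \<comment> \<open>\<rho> is the state \<Phi>_{R_A A'} \<otimes> \<Phi>_{R_B B'}, invariant under transposing R_B B'\<close>
  define \<rho> where "\<rho> = (\<lambda>u w. c * (\<Omega> u * cnj (\<Omega> w)))"
  have "density \<rho>"
    unfolding density_def
  proof
    show "psd \<rho>"
      unfolding \<rho>_def by (rule psd_scale[OF c_pos(1) psd_rank_one])
    show "mtrace \<rho> = 1"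
      unfolding mtrace_def \<rho>_def \<Omega>_def c_def
      by (simp add: sum_UNIV_prod delta_simps sum_distrib_left[symmetric]) (simp add: field_simps)
  qed
  moreover have "PPT \<rho>"
  proof -
    have "partial_transpose \<rho> = \<rho>"
      unfolding partial_transpose_def \<rho>_def \<Omega>_def by (auto simp: fun_eq_iff)
    then show ?thesis
      unfolding PPT_def using \<open>density \<rho>\<close> by (simp add: density_def)
  qed
  ultimately have "PPT (apply_bip N \<rho>)"
    using assms unfolding completely_PPT_preserving_def by blast
  moreover have "apply_bip N \<rho> = (\<lambda>u w. c * choi_bipartite N u w)"
    unfolding apply_bip_def \<rho>_def \<Omega>_def choi_bipartite_def choi_def mid_swap_def
    by (auto simp: fun_eq_iff delta_simps)
  ultimately have "psd (\<lambda>u w. c * partial_transpose (choi_bipartite N) u w)"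
    unfolding PPT_def partial_transpose_def by (simp add: case_prod_unfold)
  then have "psd (\<lambda>u w. inverse c * (c * partial_transpose (choi_bipartite N) u w))"
    by (rule psd_scale[rotated]) (simp add: c_def less_eq_complex_def)
  then show ?thesis
    unfolding PPT_def using c_pos(2) by (simp add: mult.assoc[symmetric])
qed

section \<open>The marginal channel\<close>

(* Q(Y) = tr_A N(1_{A'} \<otimes> Y) / |A'|, specified through its Choi matrix. *)
definition marginal_channel ::
  "((('a1::finite) \<times> ('b1::finite)) cmat \<Rightarrow> (('a::finite) \<times> ('b::finite)) cmat)
     \<Rightarrow> 'b1 cmat \<Rightarrow> 'b cmat" where
  "marginal_channel N = choi_map (\<lambda>p q. inverse (of_nat CARD('a1)) *
     ptrace_fst (choi_bipartite N) p q)"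

lemma channel_marginal_channel:
  fixes N :: "(('a1::finite) \<times> ('b1::finite)) cmat \<Rightarrow> (('a::finite) \<times> ('b::finite)) cmat"
  assumes "channel N"
  shows "channel (marginal_channel N)"
  unfolding marginal_channel_def
proof (rule channel_choi_map)
  have "psd (choi N)"
    using assms unfolding channel_def completely_positive_iff_psd_choi by simp
  then show "psd (\<lambda>p q. inverse (of_nat CARD('a1)) * ptrace_fst (choi_bipartite N) p q)"
    unfolding choi_bipartite_def
    by (intro psd_scale psd_ptrace_fst psd_reindex[OF _ bij_mid_swap]) (simp_all add: less_eq_complex_def)
next
  fix y y' :: 'b1
  have "(\<Sum>b\<in>UNIV. ptrace_fst (choi_bipartite N) (y, b) (y', b))
      = (\<Sum>x\<in>UNIV. \<Sum>k\<in>UNIV. choi N ((x, y), k) ((x, y'), k))"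
    unfolding ptrace_fst_def choi_bipartite_def mid_swap_def
    by (simp add: sum_UNIV_prod sum_rotate3[where C = "UNIV :: 'b set"])
  also have "\<dots> = of_nat CARD('a1) * ident y y'"
    using assms unfolding channel_def trace_preserving_def sum_choi_diag
    by (simp add: mtrace_munit ident_def)
  finally show "(\<Sum>b\<in>UNIV. inverse (of_nat CARD('a1)) * ptrace_fst (choi_bipartite N) (y, b) (y', b))
      = ident y y'"
    by (simp add: sum_distrib_left[symmetric])
qed

lemma choi_le_marginal_channel:
  fixes N :: "(('a1::finite) \<times> ('b1::finite)) cmat \<Rightarrow> (('a::finite) \<times> ('b::finite)) cmat"
  assumes "completely_PPT_preserving N"
  shows "loewner_le (choi N)
    (\<lambda>p q. of_nat CARD('a1) * choi (tensor_map replace_id (marginal_channel N)) p q)"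
proof -
  define R where
    "R = (\<lambda>(c :: 'a1 \<times> 'a, d) (c', d'). ident c c' * ptrace_fst (choi_bipartite N) d d')"
  have "loewner_le (choi_bipartite N) R"
    using PPT_choi_bipartite[OF assms] unfolding R_def PPT_def by (rule reduction_criterion_if_PPT)
  then have "loewner_le (\<lambda>p q. choi_bipartite N (mid_swap p) (mid_swap q))
      (\<lambda>p q. R (mid_swap p) (mid_swap q))"
    unfolding loewner_le_def using psd_reindex[OF _ bij_mid_swap] by fastforce
  moreover have "(\<lambda>p q. choi_bipartite N (mid_swap p) (mid_swap q)) = choi N"
    unfolding choi_bipartite_def mid_swap_def by (simp add: fun_eq_iff)
  moreover have "(\<lambda>p q. R (mid_swap p) (mid_swap q))
      = (\<lambda>p q. of_nat CARD('a1) * choi (tensor_map replace_id (marginal_channel N)) p q)"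
    unfolding marginal_channel_def R_def
    by (auto simp: fun_eq_iff mid_swap_def choi_tensor_map choi_replace_id choi_choi_map ident_def)
  ultimately show ?thesis
    by simp
qed

section \<open>Max-divergence bounds\<close>

lemma D_max_le:
  assumes "c > 0" and "loewner_le \<rho> (\<lambda>i j. of_real c * \<sigma> i j)"
  shows "D_max \<rho> \<sigma> \<le> ereal (log 2 c)"
  unfolding D_max_def using assms by (intro Inf_lower) blast

lemma D_max_ch_le_if_choi_le:
  fixes M M' :: "('i::finite) cmat \<Rightarrow> ('o::finite) cmat"
  assumes "c > 0" and "loewner_le (choi M) (\<lambda>p q. of_real c * choi M' p q)"
  shows "D_max_ch M M' \<le> ereal (log 2 c)"
  unfolding D_max_ch_def
proof (rule SUP_least)
  fix \<rho> :: "('i \<times> 'i) cmat"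
  assume "\<rho> \<in> {\<rho>. density \<rho>}"
  then have "psd \<rho>"
    by (simp add: density_def)
  then show "D_max (id_tensor M \<rho>) (id_tensor M' \<rho>) \<le> ereal (log 2 c)"
    using assms by (intro D_max_le loewner_le_id_tensor)
qed

lemma S_max_ge:
  fixes N :: "(('a1::finite) \<times> ('b1::finite)) cmat \<Rightarrow> (('a::finite) \<times> ('b::finite)) cmat"
  assumes "channel Q" and "D_max_ch N (tensor_map (replace_id :: 'a1 cmat \<Rightarrow> 'a cmat) Q) \<le> t"
  shows "S_max N \<ge> - t"
proof -
  have "(INF Q \<in> {Q. channel Q}. D_max_ch N (tensor_map (replace_id :: 'a1 cmat \<Rightarrow> 'a cmat) Q)) \<le> t"
    using assms by (intro INF_lower2) auto
  then show ?thesis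
    unfolding S_max_def by (rule ereal_minus_le_minus[THEN iffD2])
qed

theorem proposition13:
  fixes N :: "(('a1::finite) \<times> ('b1::finite)) cmat \<Rightarrow> (('a::finite) \<times> ('b::finite)) cmat"
  assumes "channel N"
    and "completely_PPT_preserving N"
  shows "S_max N \<ge> - ereal (log 2 (real CARD('a1)))"
proof (rule S_max_ge)
  show "channel (marginal_channel N)"
    using assms(1) by (rule channel_marginal_channel)
  show "D_max_ch N (tensor_map replace_id (marginal_channel N)) \<le> ereal (log 2 (real CARD('a1)))"
    using choi_le_marginal_channel[OF assms(2)] by (intro D_max_ch_le_if_choi_le) simp_all
qed

end
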